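(* Let $(G,r)$ be a symmetric group with $|G|\ge2$, $(G,+,\cdot)$ its associated left brace, and $\{1\}=K_0\subseteq K_1\subseteq\cdots$ its derived chain of ideals. (1) For all integers $j,s$ with $1\le s\le j$: $((\cdots((K_j*G)*G)*\cdots)*G)\subseteq K_{j-s}$, where $*G$ is applied $s$ times. (2) For an integer $m\ge1$ the following are equivalent: (a) $(G,r)$ has finite multipermutation level $\mathrm{mpl}(G,r)=m$; (b) the derived chain has the form $\{1\}=K_0\subsetneq K_1\subsetneq\cdots\subsetneq K_{m-1}\subsetneq K_m=G$; (c) $G^{(j+1)}\subseteq K_{m-j}$ for $0\le j\le m$, and $G^{(j+1)}\not\subseteq K_{m-j-1}$ for $0\le j\le m-1$; (d) $G^{(m+1)}=0$ and $G^{(m)}\neq0$ (i.e. the brace is right nilpotent of class $m+1$).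
   Context: A symmetric group is a pair $(G,r)$, $G$ a group, $r(u,v)=({}^uv,u^v)$ an involutive bijection of $G\times G$ with ${}^a1=1,{}^1u=u,1^u=1,a^1=a$, ${}^{ab}u={}^a({}^bu)$, $a^{uv}=(a^u)^v$, ${}^a(uv)=({}^au)({}^{a^u}v)$, $(ab)^u=(a^{{}^bu})(b^u)$, $uv=({}^uv)(u^v)$; it is a non-degenerate symmetric set. Its associated left brace is $(G,+,\cdot)$ with $a+b:=a({}^{a^{-1}}b)$; then ${}^ab=ab-a$ and $0=1$. Define $a*b:=ab-a-b$; for subsets $A,B$, $A*B$ is the additive subgroup generated by $\{a*b:a\in A,b\in B\}$; $G^{(1)}=G$, $G^{(s+1)}=G^{(s)}*G$. An ideal is a normal subgroup $H$ with ${}^aH\subseteq H$ for all $a$; $G/H$ then inherits a symmetric group structure. The socle is $\mathrm{soc}(G)=\{a:{}^au=u\ \forall u\in G\}$, an ideal with $G/\mathrm{soc}(G)\cong\mathrm{Ret}(G,r)$. Put $G^0=G$, $G^j=G^{j-1}/\mathrm{soc}(G^{j-1})$ with canonical maps $\varphi_j:G^{j-1}\to G^j$, $K_0=\{1\}$, $K_1=\mathrm{soc}(G)$, $K_j=(\varphi_{j-1}\circ\cdots\circ\varphi_1)^{-1}(\mathrm{soc}(G^{j-1}))$ for $j>1$ (the derived chain of ideals). The retraction of a non-degenerate symmetric set $(X,r)$ is $X/\!\sim$ ($x\sim y$ iff ${}^xz={}^yz$ for all $z$) with the induced map; $\mathrm{mpl}(X,r)=m$ means $m$ is minimal such that the $m$-fold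 iterated retraction is a one-element set. *)

theory Defs
  imports "HOL-Algebra.Generated_Groups"
begin

text \<open>A symmetric group (G,r): G a group (HOL-Algebra, relativised to carrier G),
  r(u,v) = (lam u v, rho u v), i.e. lam u v is the left action of u on v and rho u v the right action of v on u.\<close>

definition symmetric_group ::
  "('a,'b) monoid_scheme \<Rightarrow> ('a \<Rightarrow> 'a \<Rightarrow> 'a) \<Rightarrow> ('a \<Rightarrow> 'a \<Rightarrow> 'a) \<Rightarrow> bool" where
  "symmetric_group G lam rho \<longleftrightarrow>
     group G \<and>
     (\<forall>u\<in>carrier G. \<forall>v\<in>carrier G. lam u v \<in> carrier G \<and> rho u v \<in> carrier G) \<and>
     bij_betw (\<lambda>(u,v). (lam u v, rho u v)) (carrier G \<times> carrier G) (carrier G \<times> carrier G) \<and>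
     (\<forall>u\<in>carrier G. \<forall>v\<in>carrier G.
        lam (lam u v) (rho u v) = u \<and> rho (lam u v) (rho u v) = v) \<and>
     (\<forall>a\<in>carrier G. lam a \<one>\<^bsub>G\<^esub> = \<one>\<^bsub>G\<^esub> \<and> lam \<one>\<^bsub>G\<^esub> a = a
                    \<and> rho \<one>\<^bsub>G\<^esub> a = \<one>\<^bsub>G\<^esub> \<and> rho a \<one>\<^bsub>G\<^esub> = a) \<and>
     (\<forall>a\<in>carrier G. \<forall>b\<in>carrier G. \<forall>u\<in>carrier G.
        lam (a \<otimes>\<^bsub>G\<^esub> b) u = lam a (lam b u)) \<and>
     (\<forall>a\<in>carrier G. \<forall>u\<in>carrier G. \<forall>v\<in>carrier G.
        rho a (u \<otimes>\<^bsub>G\<^esub> v) = rho (rho a u) v) \<and>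
     (\<forall>a\<in>carrier G. \<forall>u\<in>carrier G. \<forall>v\<in>carrier G.
        lam a (u \<otimes>\<^bsub>G\<^esub> v) = lam a u \<otimes>\<^bsub>G\<^esub> lam (rho a u) v) \<and>
     (\<forall>a\<in>carrier G. \<forall>b\<in>carrier G. \<forall>u\<in>carrier G.
        rho (a \<otimes>\<^bsub>G\<^esub> b) u = rho a (lam b u) \<otimes>\<^bsub>G\<^esub> rho b u) \<and>
     (\<forall>u\<in>carrier G. \<forall>v\<in>carrier G. u \<otimes>\<^bsub>G\<^esub> v = lam u v \<otimes>\<^bsub>G\<^esub> rho u v)"

definition bplus :: "('a,'b) monoid_scheme \<Rightarrow> ('a \<Rightarrow> 'a \<Rightarrow> 'a) \<Rightarrow> 'a \<Rightarrow> 'a \<Rightarrow> 'a" where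
  "bplus G lam a b = a \<otimes>\<^bsub>G\<^esub> lam (inv\<^bsub>G\<^esub> a) b"

definition add_str :: "('a,'b) monoid_scheme \<Rightarrow> ('a \<Rightarrow> 'a \<Rightarrow> 'a) \<Rightarrow> 'a monoid" where
  "add_str G lam = \<lparr>carrier = carrier G, mult = bplus G lam, one = \<one>\<^bsub>G\<^esub>\<rparr>"

definition bminus :: "('a,'b) monoid_scheme \<Rightarrow> ('a \<Rightarrow> 'a \<Rightarrow> 'a) \<Rightarrow> 'a \<Rightarrow> 'a \<Rightarrow> 'a" where
  "bminus G lam a b = bplus G lam a (inv\<^bsub>add_str G lam\<^esub> b)"

definition bstar :: "('a,'b) monoid_scheme \<Rightarrow> ('a \<Rightarrow> 'a \<Rightarrow> 'a) \<Rightarrow> 'a \<Rightarrow> 'a \<Rightarrow> 'a" where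
  "bstar G lam a b = bminus G lam (bminus G lam (a \<otimes>\<^bsub>G\<^esub> b) a) b"

definition set_star :: "('a,'b) monoid_scheme \<Rightarrow> ('a \<Rightarrow> 'a \<Rightarrow> 'a) \<Rightarrow> 'a set \<Rightarrow> 'a set \<Rightarrow> 'a set" where
  "set_star G lam A B = generate (add_str G lam) {bstar G lam a b | a b. a \<in> A \<and> b \<in> B}"

text \<open>rseries G lam s = G^(s) for s \<ge> 1 (the value at 0 is a junk value, = G).\<close>
fun rseries :: "('a,'b) monoid_scheme \<Rightarrow> ('a \<Rightarrow> 'a \<Rightarrow> 'a) \<Rightarrow> nat \<Rightarrow> 'a set" where
  "rseries G lam 0 = carrier G"
| "rseries G lam (Suc 0) = carrier G"
| "rseries G lam (Suc (Suc n)) = set_star G lam (rseries G lam (Suc n)) (carrier G)"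

fun iter_star :: "('a,'b) monoid_scheme \<Rightarrow> ('a \<Rightarrow> 'a \<Rightarrow> 'a) \<Rightarrow> 'a set \<Rightarrow> nat \<Rightarrow> 'a set" where
  "iter_star G lam X 0 = X"
| "iter_star G lam X (Suc n) = set_star G lam (iter_star G lam X n) (carrier G)"

text \<open>The socle of the quotient symmetric group (G/E), pulled back to G:
  representatives a whose class acts trivially on all classes.\<close>
definition socE :: "('a,'b) monoid_scheme \<Rightarrow> ('a \<Rightarrow> 'a \<Rightarrow> 'a) \<Rightarrow> ('a \<times> 'a) set \<Rightarrow> 'a set" where
  "socE G lam E = {a \<in> carrier G. \<forall>u\<in>carrier G. (lam a u, u) \<in> E}"

definition soc :: "('a,'b) monoid_scheme \<Rightarrow> ('a \<Rightarrow> 'a \<Rightarrow> 'a) \<Rightarrow> 'a set" where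
  "soc G lam = {a \<in> carrier G. \<forall>u\<in>carrier G. lam a u = u}"

text \<open>derE G lam j is the congruence on G whose classes are the elements of G^j:
  G^0 = G, and G^(j+1) = G^j / soc(G^j), with canonical maps the identity on representatives.\<close>
fun derE :: "('a,'b) monoid_scheme \<Rightarrow> ('a \<Rightarrow> 'a \<Rightarrow> 'a) \<Rightarrow> nat \<Rightarrow> ('a \<times> 'a) set" where
  "derE G lam 0 = {(a,b). a \<in> carrier G \<and> b \<in> carrier G \<and> a = b}"
| "derE G lam (Suc j) = {(a,b). a \<in> carrier G \<and> b \<in> carrier G \<and>
                               inv\<^bsub>G\<^esub> a \<otimes>\<^bsub>G\<^esub> b \<in> socE G lam (derE G lam j)}"

text \<open>K_0 = {1}, K_(j+1) = preimage in G of soc(G^j).\<close>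
fun Kchain :: "('a,'b) monoid_scheme \<Rightarrow> ('a \<Rightarrow> 'a \<Rightarrow> 'a) \<Rightarrow> nat \<Rightarrow> 'a set" where
  "Kchain G lam 0 = {\<one>\<^bsub>G\<^esub>}"
| "Kchain G lam (Suc j) = socE G lam (derE G lam j)"

text \<open>retE k: x, y have the same image in the k-fold retraction.\<close>
fun retE :: "'a set \<Rightarrow> ('a \<Rightarrow> 'a \<Rightarrow> 'a) \<Rightarrow> nat \<Rightarrow> ('a \<times> 'a) set" where
  "retE X lam 0 = {(x,y). x \<in> X \<and> y \<in> X \<and> x = y}"
| "retE X lam (Suc k) = {(x,y). x \<in> X \<and> y \<in> X \<and>
                              (\<forall>z\<in>X. (lam x z, lam y z) \<in> retE X lam k)}"

definition mpl_eq :: "'a set \<Rightarrow> ('a \<Rightarrow> 'a \<Rightarrow> 'a) \<Rightarrow> nat \<Rightarrow> bool" where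
  "mpl_eq X lam m \<longleftrightarrow> retE X lam m = X \<times> X \<and> (\<forall>k<m. retE X lam k \<noteq> X \<times> X)"

end

theory Submission
  imports Defs
begin

text \<open>Put \<open>soc_mod K = {a. a * u \<in> K for all u}\<close>, the preimage of the socle of \<open>G/K\<close>,
  so that \<open>K\<^sub>j\<^sub>+\<^sub>1 = soc_mod K\<^sub>j\<close>. Since \<open>K\<close> is an additive subgroup, \<open>X * G \<subseteq> K\<close>
  holds iff \<open>X \<subseteq> soc_mod K\<close>; this gives (1) at once, and iterating it from \<open>G\<^sup>(\<^sup>1\<^sup>) = G\<close>
  gives \<open>G\<^sup>(\<^sup>j\<^sup>+\<^sup>1\<^sup>) \<subseteq> K\<^sub>i \<longleftrightarrow> K\<^sub>i\<^sub>+\<^sub>j = G\<close>. Thus (b), (c) and (d) all say that \<open>m\<close> is the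
  least index with \<open>K\<^sub>m = G\<close>. The \<open>k\<close>-th retraction identifies exactly the cosets of \<open>K\<^sub>k\<close>,
  so this least index is also \<open>mpl(G,r)\<close>.\<close>

locale symmetric_grp =
  fixes G :: "('a,'b) monoid_scheme" (structure) and lam rho :: "'a \<Rightarrow> 'a \<Rightarrow> 'a"
  assumes symmetric: "symmetric_group G lam rho"
begin

sublocale group G
  using symmetric by (simp add: symmetric_group_def)

lemma lam_closed [simp]: "u \<in> carrier G \<Longrightarrow> v \<in> carrier G \<Longrightarrow> lam u v \<in> carrier G"
  using symmetric unfolding symmetric_group_def by blast

lemma rho_closed [simp]: "u \<in> carrier G \<Longrightarrow> v \<in> carrier G \<Longrightarrow> rho u v \<in> carrier G"
  using symmetric unfolding symmetric_group_def by blast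

lemma lam_lam_rho: "u \<in> carrier G \<Longrightarrow> v \<in> carrier G \<Longrightarrow> lam (lam u v) (rho u v) = u"
  using symmetric unfolding symmetric_group_def by blast

lemma lam_one_right [simp]: "a \<in> carrier G \<Longrightarrow> lam a \<one> = \<one>"
  using symmetric unfolding symmetric_group_def by blast

lemma lam_one_left [simp]: "a \<in> carrier G \<Longrightarrow> lam \<one> a = a"
  using symmetric unfolding symmetric_group_def by blast

lemma lam_mult:
  "a \<in> carrier G \<Longrightarrow> b \<in> carrier G \<Longrightarrow> u \<in> carrier G \<Longrightarrow> lam (a \<otimes> b) u = lam a (lam b u)"
  using symmetric unfolding symmetric_group_def by blast

lemma lam_mult_right:
  "a \<in> carrier G \<Longrightarrow> u \<in> carrier G \<Longrightarrow> v \<in> carrier G \<Longrightarrow> lam a (u \<otimes> v) = lam a u \<otimes> lam (rho a u) v"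
  using symmetric unfolding symmetric_group_def by blast

lemma mult_eq_lam_rho: "u \<in> carrier G \<Longrightarrow> v \<in> carrier G \<Longrightarrow> u \<otimes> v = lam u v \<otimes> rho u v"
  using symmetric unfolding symmetric_group_def by blast

lemma lam_inv_lam [simp]: "a \<in> carrier G \<Longrightarrow> u \<in> carrier G \<Longrightarrow> lam (inv a) (lam a u) = u"
  using lam_mult[of "inv a" a u] by simp

lemma lam_lam_inv [simp]: "a \<in> carrier G \<Longrightarrow> u \<in> carrier G \<Longrightarrow> lam a (lam (inv a) u) = u"
  using lam_mult[of a "inv a" u] by simp

abbreviation brace_add :: "'a monoid" where
  "brace_add \<equiv> add_str G lam"

abbreviation bplus_infix (infixl "\<boxplus>" 65) where
  "a \<boxplus> b \<equiv> bplus G lam a b"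

abbreviation bneg :: "'a \<Rightarrow> 'a" where
  "bneg a \<equiv> inv\<^bsub>brace_add\<^esub> a"

lemma brace_add_simps [simp]:
  "carrier brace_add = carrier G" "mult brace_add = bplus G lam" "one brace_add = \<one>"
  by (simp_all add: add_str_def)

lemma bplus_eq: "a \<boxplus> b = a \<otimes> lam (inv a) b"
  by (simp add: bplus_def)

lemma bplus_closed [simp]: "a \<in> carrier G \<Longrightarrow> b \<in> carrier G \<Longrightarrow> a \<boxplus> b \<in> carrier G"
  by (simp add: bplus_eq)

lemma mult_eq_bplus_lam: "a \<in> carrier G \<Longrightarrow> b \<in> carrier G \<Longrightarrow> a \<otimes> b = a \<boxplus> lam a b"
  by (simp add: bplus_eq)

lemma bplus_comm:
  assumes a: "a \<in> carrier G" and b: "b \<in> carrier G"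
  shows "a \<boxplus> b = b \<boxplus> a"
proof -
  define v where "v = lam (inv a) b"
  have v: "v \<in> carrier G" and lam_a_v: "lam a v = b"
    using a b by (simp_all add: v_def)
  have "a \<otimes> v = b \<otimes> rho a v"
    using mult_eq_lam_rho[OF a v] lam_a_v by simp
  moreover have "rho a v = lam (inv b) a"
    using lam_lam_rho[OF a v] lam_a_v lam_inv_lam[OF b, of "rho a v"] a v by simp
  ultimately show ?thesis
    by (simp add: bplus_eq v_def)
qed

lemma bplus_assoc:
  assumes a: "a \<in> carrier G" and b: "b \<in> carrier G" and c: "c \<in> carrier G"
  shows "(a \<boxplus> b) \<boxplus> c = a \<boxplus> (b \<boxplus> c)"
proof -
  have "inv a \<otimes> b = lam (inv a) b \<otimes> rho (inv a) b"
    using a b by (simp add: mult_eq_lam_rho[of "inv a" b])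
  then have "b = a \<otimes> lam (inv a) b \<otimes> rho (inv a) b"
    using a b inv_solve_left'[of "lam (inv a) b \<otimes> rho (inv a) b" a b] by (simp add: m_assoc)
  then have "a \<otimes> lam (inv a) b = b \<otimes> inv (rho (inv a) b)"
    using a b inv_solve_right[of "a \<otimes> lam (inv a) b" b "rho (inv a) b"] by simp
  then have inv_sum: "inv (a \<otimes> lam (inv a) b) = rho (inv a) b \<otimes> inv b"
    using a b by (simp add: inv_mult_group)
  have "a \<boxplus> (b \<boxplus> c) = a \<otimes> (lam (inv a) b \<otimes> lam (rho (inv a) b) (lam (inv b) c))"
    using a b c by (simp add: bplus_eq lam_mult_right)
  also have "\<dots> = a \<otimes> lam (inv a) b \<otimes> lam (rho (inv a) b \<otimes> inv b) c"
    using a b c by (simp add: lam_mult m_assoc)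
  also have "\<dots> = (a \<boxplus> b) \<boxplus> c"
    using a b c by (simp add: bplus_eq inv_sum)
  finally show ?thesis by simp
qed

lemma bplus_one_left [simp]: "b \<in> carrier G \<Longrightarrow> \<one> \<boxplus> b = b"
  by (simp add: bplus_eq)

lemma bplus_one_right [simp]: "b \<in> carrier G \<Longrightarrow> b \<boxplus> \<one> = b"
  by (simp add: bplus_eq)

lemma lam_inv_bplus: "a \<in> carrier G \<Longrightarrow> lam a (inv a) \<boxplus> a = \<one>"
  by (subst bplus_comm) (simp_all add: bplus_eq)

lemma brace_add_comm_group: "comm_group brace_add"
proof (rule comm_groupI)
  fix x y z
  assume "x \<in> carrier brace_add" "y \<in> carrier brace_add" "z \<in> carrier brace_add"
  then show "x \<otimes>\<^bsub>brace_add\<^esub> y \<otimes>\<^bsub>brace_add\<^esub> z = x \<otimes>\<^bsub>brace_add\<^esub> (y \<otimes>\<^bsub>brace_add\<^esub> z)"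
    by (simp add: bplus_assoc)
next
  fix x y assume "x \<in> carrier brace_add" "y \<in> carrier brace_add"
  then show "x \<otimes>\<^bsub>brace_add\<^esub> y = y \<otimes>\<^bsub>brace_add\<^esub> x"
    using bplus_comm by simp
next
  fix x assume "x \<in> carrier brace_add"
  then show "\<exists>y\<in>carrier brace_add. y \<otimes>\<^bsub>brace_add\<^esub> x = \<one>\<^bsub>brace_add\<^esub>"
    using lam_inv_bplus[of x] by (intro bexI[of _ "lam x (inv x)"]) simp_all
qed simp_all

sublocale add: comm_group brace_add
  by (rule brace_add_comm_group)

lemma bneg_eq: "a \<in> carrier G \<Longrightarrow> bneg a = lam a (inv a)"
  by (rule add.inv_equality) (simp_all add: lam_inv_bplus)

lemma bneg_closed [simp]: "a \<in> carrier G \<Longrightarrow> bneg a \<in> carrier G"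
  using add.inv_closed by simp

lemma bplus_bneg_right [simp]: "a \<in> carrier G \<Longrightarrow> a \<boxplus> bneg a = \<one>"
  using add.r_inv[of a] by simp

lemma bplus_bneg_left [simp]: "a \<in> carrier G \<Longrightarrow> bneg a \<boxplus> a = \<one>"
  using add.l_inv[of a] by simp

lemma bneg_bplus_cancel_left [simp]: "a \<in> carrier G \<Longrightarrow> b \<in> carrier G \<Longrightarrow> bneg a \<boxplus> (a \<boxplus> b) = b"
  by (simp add: bplus_assoc[symmetric])

lemma bplus_bneg_cancel_left [simp]: "a \<in> carrier G \<Longrightarrow> b \<in> carrier G \<Longrightarrow> a \<boxplus> (bneg a \<boxplus> b) = b"
  by (simp add: bplus_assoc[symmetric])

lemma bplus_bneg_cancel_right: "a \<in> carrier G \<Longrightarrow> b \<in> carrier G \<Longrightarrow> (a \<boxplus> b) \<boxplus> bneg a = b"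
  by (simp add: bplus_comm[of a] bplus_assoc)

lemma bplus_left_commute:
  "a \<in> carrier G \<Longrightarrow> b \<in> carrier G \<Longrightarrow> c \<in> carrier G \<Longrightarrow> a \<boxplus> (b \<boxplus> c) = b \<boxplus> (a \<boxplus> c)"
  by (simp flip: bplus_assoc add: bplus_comm[of a b])

lemma bneg_bplus: "a \<in> carrier G \<Longrightarrow> b \<in> carrier G \<Longrightarrow> bneg (a \<boxplus> b) = bneg a \<boxplus> bneg b"
  using add.inv_mult[of a b] by simp

lemma lam_bplus:
  assumes a: "a \<in> carrier G" and b: "b \<in> carrier G" and c: "c \<in> carrier G"
  shows "lam a (b \<boxplus> c) = lam a b \<boxplus> lam a c"
proof -
  have "inv (lam a b) \<otimes> (a \<otimes> b) = rho a b"
    using mult_eq_lam_rho[OF a b] a b by (simp add: m_assoc[symmetric])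
  then have "inv (lam a b) \<otimes> a \<otimes> b = rho a b"
    using a b by (simp add: m_assoc)
  then have rho_inv: "rho a b \<otimes> inv b = inv (lam a b) \<otimes> a"
    using a b inv_solve_right'[of "inv (lam a b) \<otimes> a" "rho a b" b] by simp
  have "lam a (b \<boxplus> c) = lam a b \<otimes> lam (rho a b \<otimes> inv b) c"
    using a b c by (simp add: bplus_eq lam_mult_right lam_mult)
  also have "\<dots> = lam a b \<boxplus> lam a c"
    using a b c by (simp add: rho_inv bplus_eq lam_mult)
  finally show ?thesis .
qed

lemma lam_bneg: "a \<in> carrier G \<Longrightarrow> b \<in> carrier G \<Longrightarrow> lam a (bneg b) = bneg (lam a b)"
  by (rule add.inv_equality[symmetric]) (simp_all flip: lam_bplus)

lemma bstar_eq: "a \<in> carrier G \<Longrightarrow> b \<in> carrier G \<Longrightarrow> bstar G lam a b = lam a b \<boxplus> bneg b"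
  by (simp add: bstar_def bminus_def mult_eq_bplus_lam bplus_bneg_cancel_right)

definition soc_mod :: "'a set \<Rightarrow> 'a set" where
  "soc_mod K = {a \<in> carrier G. \<forall>u\<in>carrier G. lam a u \<boxplus> bneg u \<in> K}"

lemma soc_mod_subset_carrier: "soc_mod K \<subseteq> carrier G"
  by (auto simp: soc_mod_def)

end

subsection \<open>Ideals and socles modulo an ideal\<close>

locale brace_ideal = symmetric_grp +
  fixes K :: "'a set"
  assumes normal: "K \<lhd> G"
    and lam_mem: "\<lbrakk>x \<in> carrier G; k \<in> K\<rbrakk> \<Longrightarrow> lam x k \<in> K"
begin

lemma ideal_subgroup: "subgroup K G"
  using normal by (rule normal_imp_subgroup)

lemma ideal_subset_carrier [simp]: "k \<in> K \<Longrightarrow> k \<in> carrier G"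
  using subgroup.mem_carrier[OF ideal_subgroup] .

lemma ideal_one [simp]: "\<one> \<in> K"
  using subgroup.one_closed[OF ideal_subgroup] .

lemma ideal_mult: "a \<in> K \<Longrightarrow> b \<in> K \<Longrightarrow> a \<otimes> b \<in> K"
  using subgroup.m_closed[OF ideal_subgroup] .

lemma ideal_inv: "a \<in> K \<Longrightarrow> inv a \<in> K"
  using subgroup.m_inv_closed[OF ideal_subgroup] .

lemma ideal_conj: "x \<in> carrier G \<Longrightarrow> k \<in> K \<Longrightarrow> x \<otimes> k \<otimes> inv x \<in> K"
  using normal.inv_op_closed2[OF normal] .

lemma ideal_lam_iff: "x \<in> carrier G \<Longrightarrow> v \<in> carrier G \<Longrightarrow> lam x v \<in> K \<longleftrightarrow> v \<in> K"
  using lam_mem lam_inv_lam[of x v] by (metis inv_closed)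

lemma ideal_bplus: "a \<in> K \<Longrightarrow> b \<in> K \<Longrightarrow> a \<boxplus> b \<in> K"
  by (simp add: bplus_eq ideal_mult ideal_inv lam_mem)

lemma ideal_bneg: "a \<in> K \<Longrightarrow> bneg a \<in> K"
  by (simp add: bneg_eq lam_mem ideal_inv)

lemma ideal_bneg_iff: "a \<in> carrier G \<Longrightarrow> bneg a \<in> K \<longleftrightarrow> a \<in> K"
  using ideal_bneg[of "bneg a"] ideal_bneg[of a] by auto

lemma ideal_add_subgroup: "subgroup K brace_add"
proof (rule add.subgroupI)
  show "K \<noteq> {}"
    using ideal_one by blast
qed (auto simp: ideal_bneg ideal_bplus)

lemma ideal_inv_mult_iff:
  assumes x: "x \<in> carrier G" and y: "y \<in> carrier G"
  shows "inv x \<otimes> y \<in> K \<longleftrightarrow> x \<boxplus> bneg y \<in> K"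
proof
  assume "inv x \<otimes> y \<in> K"
  moreover define k where "k = inv x \<otimes> y"
  ultimately have k: "k \<in> K" by simp
  have "y = x \<boxplus> lam x k"
    using x y by (simp flip: mult_eq_bplus_lam add: k_def m_assoc[symmetric])
  then have "x \<boxplus> bneg y = bneg (lam x k)"
    using x k by (simp add: bneg_bplus)
  then show "x \<boxplus> bneg y \<in> K"
    using x k by (simp add: ideal_bneg lam_mem)
next
  assume "x \<boxplus> bneg y \<in> K"
  moreover define k where "k = bneg (x \<boxplus> bneg y)"
  ultimately have k: "k \<in> K"
    by (simp add: ideal_bneg)
  have "y = x \<boxplus> k"
    using x y by (simp add: k_def bneg_bplus)
  then have "inv x \<otimes> y = lam (inv x) k"
    using x k by (simp add: bplus_eq m_assoc[symmetric])
  then show "inv x \<otimes> y \<in> K"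
    using x k by (simp add: lam_mem)
qed

lemma ideal_subset_soc_mod: "K \<subseteq> soc_mod K"
proof
  fix k assume k: "k \<in> K"
  have "lam k u \<boxplus> bneg u \<in> K" if u: "u \<in> carrier G" for u
  proof -
    define k' where "k' = inv u \<otimes> k \<otimes> u"
    have k': "k' \<in> K"
      using ideal_conj[of "inv u" k] u k by (simp add: k'_def)
    have "k \<otimes> u = u \<otimes> k'"
      using u k by (simp add: k'_def m_assoc[symmetric])
    then have "k \<boxplus> lam k u = u \<boxplus> lam u k'"
      using u k k' by (simp add: mult_eq_bplus_lam)
    then have "lam k u = bneg k \<boxplus> (u \<boxplus> lam u k')"
      using u k k' by (metis bneg_bplus_cancel_left ideal_subset_carrier lam_closed)
    then have "lam k u \<boxplus> bneg u = bneg k \<boxplus> lam u k'"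
      using u k k' by (simp add: bplus_left_commute[of "bneg k"] bplus_bneg_cancel_right)
    then show ?thesis
      using u k k' by (simp add: ideal_bplus ideal_bneg lam_mem)
  qed
  then show "k \<in> soc_mod K"
    using k by (simp add: soc_mod_def)
qed

lemma soc_mod_mult:
  assumes a: "a \<in> soc_mod K" and b: "b \<in> soc_mod K"
  shows "a \<otimes> b \<in> soc_mod K"
proof -
  have ag: "a \<in> carrier G" and bg: "b \<in> carrier G"
    using a b by (simp_all add: soc_mod_def)
  have "lam (a \<otimes> b) u \<boxplus> bneg u \<in> K" if u: "u \<in> carrier G" for u
  proof -
    have "lam (a \<otimes> b) u \<boxplus> bneg u = lam a (lam b u \<boxplus> bneg u) \<boxplus> (lam a u \<boxplus> bneg u)"
      using ag bg u by (simp add: lam_mult lam_bplus lam_bneg bplus_assoc)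
    moreover have "lam b u \<boxplus> bneg u \<in> K" "lam a u \<boxplus> bneg u \<in> K"
      using a b u by (simp_all add: soc_mod_def)
    ultimately show ?thesis
      using ag by (simp add: ideal_bplus lam_mem)
  qed
  then show ?thesis
    using ag bg by (simp add: soc_mod_def)
qed

lemma soc_mod_inv:
  assumes a: "a \<in> soc_mod K"
  shows "inv a \<in> soc_mod K"
proof -
  have ag: "a \<in> carrier G"
    using a by (simp add: soc_mod_def)
  have "lam (inv a) u \<boxplus> bneg u \<in> K" if u: "u \<in> carrier G" for u
  proof -
    define w where "w = lam (inv a) u"
    have w: "w \<in> carrier G" and u_eq: "u = lam a w"
      using ag u by (simp_all add: w_def)
    have "lam a w \<boxplus> bneg w \<in> K"
      using a w by (simp add: soc_mod_def)
    then have "bneg (u \<boxplus> bneg w) \<in> K"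
      by (simp add: u_eq ideal_bneg)
    then show ?thesis
      using u w by (simp add: bneg_bplus bplus_comm flip: w_def)
  qed
  then show ?thesis
    using ag by (simp add: soc_mod_def)
qed

lemma soc_mod_conj:
  assumes x: "x \<in> carrier G" and a: "a \<in> soc_mod K"
  shows "x \<otimes> a \<otimes> inv x \<in> soc_mod K"
proof -
  have ag: "a \<in> carrier G"
    using a by (simp add: soc_mod_def)
  have "lam (x \<otimes> a \<otimes> inv x) u \<boxplus> bneg u \<in> K" if u: "u \<in> carrier G" for u
  proof -
    define w where "w = lam (inv x) u"
    have w: "w \<in> carrier G"
      using x u by (simp add: w_def)
    have "lam (x \<otimes> a \<otimes> inv x) u \<boxplus> bneg u = lam x (lam a w \<boxplus> bneg w)"
      using x ag u w by (simp add: lam_mult lam_bplus lam_bneg w_def)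
    moreover have "lam a w \<boxplus> bneg w \<in> K"
      using a w by (simp add: soc_mod_def)
    ultimately show ?thesis
      using x ag w by (simp add: lam_mem)
  qed
  then show ?thesis
    using ag x by (simp add: soc_mod_def)
qed

lemma soc_mod_lam:
  assumes x: "x \<in> carrier G" and a: "a \<in> soc_mod K"
  shows "lam x a \<in> soc_mod K"
proof -
  have ag: "a \<in> carrier G"
    using a by (simp add: soc_mod_def)
  define y where "y = x \<otimes> a \<otimes> inv x"
  have y_soc: "y \<in> soc_mod K" and y: "y \<in> carrier G"
    using soc_mod_conj[OF x a] x ag by (simp_all add: y_def)
  have "y \<otimes> x = x \<otimes> a"
    using x ag by (simp add: y_def m_assoc)
  then have "y \<boxplus> lam y x = x \<boxplus> lam x a"
    using x ag y by (simp add: mult_eq_bplus_lam)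
  then have "lam x a = bneg x \<boxplus> (y \<boxplus> lam y x)"
    using x ag y by simp
  also have "\<dots> = y \<boxplus> (lam y x \<boxplus> bneg x)"
    using x y by (simp add: bplus_comm bplus_left_commute)
  also have "\<dots> = y \<otimes> lam (inv y) (lam y x \<boxplus> bneg x)"
    by (simp add: bplus_eq)
  finally have lam_x_a: "lam x a = y \<otimes> lam (inv y) (lam y x \<boxplus> bneg x)" .
  have "lam y x \<boxplus> bneg x \<in> K"
    using y_soc x by (simp add: soc_mod_def)
  then have "lam (inv y) (lam y x \<boxplus> bneg x) \<in> soc_mod K"
    using y ideal_subset_soc_mod lam_mem by blast
  then show ?thesis
    using lam_x_a y_soc soc_mod_mult by simp
qed

lemma soc_mod_normal: "soc_mod K \<lhd> G"
proof (rule normal_invI)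
  show "subgroup (soc_mod K) G"
  proof (rule subgroupI)
    show "soc_mod K \<noteq> {}"
      using ideal_one ideal_subset_soc_mod by blast
  qed (simp_all add: soc_mod_subset_carrier soc_mod_inv soc_mod_mult)
qed (rule soc_mod_conj)

lemma lam_cosets_iff_soc_mod:
  assumes x: "x \<in> carrier G" and y: "y \<in> carrier G"
  shows "(\<forall>z\<in>carrier G. inv (lam x z) \<otimes> lam y z \<in> K) \<longleftrightarrow> inv x \<otimes> y \<in> soc_mod K"
proof -
  have "inv (lam x z) \<otimes> lam y z \<in> K \<longleftrightarrow> lam (inv x \<otimes> y) z \<boxplus> bneg z \<in> K"
    if z: "z \<in> carrier G" for z
  proof -
    have "inv (lam x z) \<otimes> lam y z \<in> K \<longleftrightarrow> bneg (lam x z \<boxplus> bneg (lam y z)) \<in> K"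
      using x y z by (simp add: ideal_inv_mult_iff ideal_bneg_iff)
    also have "bneg (lam x z \<boxplus> bneg (lam y z)) = lam x (lam (inv x \<otimes> y) z \<boxplus> bneg z)"
      using x y z by (simp add: bneg_bplus bplus_comm lam_bplus lam_bneg lam_mult)
    finally show ?thesis
      using x y z by (simp add: ideal_lam_iff)
  qed
  then show ?thesis
    using x y by (auto simp: soc_mod_def)
qed

lemma set_star_subset_iff:
  assumes "X \<subseteq> carrier G"
  shows "set_star G lam X (carrier G) \<subseteq> K \<longleftrightarrow> X \<subseteq> soc_mod K"
proof
  assume star: "set_star G lam X (carrier G) \<subseteq> K"
  have "lam a u \<boxplus> bneg u \<in> K" if "a \<in> X" "u \<in> carrier G" for a u
  proof -
    have "bstar G lam a u \<in> K"
      using star that unfolding set_star_def by (blast intro: generate.incl)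
    then show ?thesis
      using that assms by (auto simp: bstar_eq)
  qed
  then show "X \<subseteq> soc_mod K"
    using assms by (auto simp: soc_mod_def)
next
  assume "X \<subseteq> soc_mod K"
  then have "{bstar G lam a b |a b. a \<in> X \<and> b \<in> carrier G} \<subseteq> K"
    using assms by (auto simp: soc_mod_def bstar_eq)
  then show "set_star G lam X (carrier G) \<subseteq> K"
    unfolding set_star_def by (rule add.generate_subgroup_incl[OF _ ideal_add_subgroup])
qed

end

context symmetric_grp
begin

lemma brace_idealI:
  "K \<lhd> G \<Longrightarrow> (\<And>x k. x \<in> carrier G \<Longrightarrow> k \<in> K \<Longrightarrow> lam x k \<in> K) \<Longrightarrow> brace_ideal G lam rho K"
  by (simp add: brace_ideal_def brace_ideal_axioms_def symmetric_grp_axioms)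

lemma (in brace_ideal) soc_mod_ideal: "brace_ideal G lam rho (soc_mod K)"
  by (rule brace_idealI[OF soc_mod_normal soc_mod_lam])

subsection \<open>The derived chain of ideals\<close>

lemma derE_eq: "derE G lam j = {(a, b). a \<in> carrier G \<and> b \<in> carrier G \<and> inv a \<otimes> b \<in> Kchain G lam j}"
proof (cases j)
  case 0
  have "inv a \<otimes> b = \<one> \<longleftrightarrow> a = b" if "a \<in> carrier G" "b \<in> carrier G" for a b
    using that inv_solve_left' by fastforce
  then show ?thesis
    using 0 by auto
qed simp

lemma Kchain_Suc_if_ideal:
  assumes "brace_ideal G lam rho (Kchain G lam j)"
  shows "Kchain G lam (Suc j) = soc_mod (Kchain G lam j)"
proof -
  interpret brace_ideal G lam rho "Kchain G lam j"
    by (rule assms)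
  show ?thesis
    by (auto simp: soc_mod_def socE_def derE_eq ideal_inv_mult_iff)
qed

lemma Kchain_ideal: "brace_ideal G lam rho (Kchain G lam j)"
proof (induction j)
  case 0
  show ?case
    by (rule brace_idealI) (auto simp: one_is_normal)
next
  case (Suc j)
  then show ?case
    using Kchain_Suc_if_ideal brace_ideal.soc_mod_ideal by metis
qed

lemma Kchain_Suc: "Kchain G lam (Suc j) = soc_mod (Kchain G lam j)"
  by (rule Kchain_Suc_if_ideal[OF Kchain_ideal])

declare Kchain.simps(2) [simp del] derE.simps(2) [simp del]

lemma Kchain_subset_carrier: "Kchain G lam j \<subseteq> carrier G"
  using brace_ideal.ideal_subset_carrier[OF Kchain_ideal] by blast

lemma Kchain_subset_Suc: "Kchain G lam j \<subseteq> Kchain G lam (Suc j)"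
  using brace_ideal.ideal_subset_soc_mod[OF Kchain_ideal] by (simp add: Kchain_Suc)

lemma Kchain_mono: "i \<le> j \<Longrightarrow> Kchain G lam i \<subseteq> Kchain G lam j"
  by (induction j rule: dec_induct) (use Kchain_subset_Suc in blast)+

lemma Kchain_stable:
  assumes "Kchain G lam (Suc i) = Kchain G lam i"
  shows "Kchain G lam (i + t) = Kchain G lam i"
  by (induction t) (simp_all add: Kchain_Suc assms[unfolded Kchain_Suc])

lemma retE_eq_derE: "retE (carrier G) lam k = derE G lam k"
proof (induction k)
  case (Suc k)
  interpret brace_ideal G lam rho "Kchain G lam k"
    by (rule Kchain_ideal)
  have "retE (carrier G) lam (Suc k) = {(x, y). x \<in> carrier G \<and> y \<in> carrier G \<and>
      (\<forall>z\<in>carrier G. inv (lam x z) \<otimes> lam y z \<in> Kchain G lam k)}"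
    by (auto simp: Suc derE_eq)
  also have "\<dots> = derE G lam (Suc k)"
    unfolding derE_eq Kchain_Suc using lam_cosets_iff_soc_mod by blast
  finally show ?case .
qed (simp add: derE_eq)

lemma retE_eq_full_iff: "retE (carrier G) lam k = carrier G \<times> carrier G \<longleftrightarrow> Kchain G lam k = carrier G"
proof
  assume full: "retE (carrier G) lam k = carrier G \<times> carrier G"
  have "a \<in> Kchain G lam k" if a: "a \<in> carrier G" for a
  proof -
    have "(\<one>, a) \<in> retE (carrier G) lam k"
      using full a by simp
    then show ?thesis
      using a by (simp add: retE_eq_derE derE_eq)
  qed
  then show "Kchain G lam k = carrier G"
    using Kchain_subset_carrier by blast
qed (auto simp: retE_eq_derE derE_eq)

subsection \<open>The four characterisations of the level\<close>

lemma mpl_eq_iff_Kchain: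
  "mpl_eq (carrier G) lam m \<longleftrightarrow> Kchain G lam m = carrier G \<and> (\<forall>k<m. Kchain G lam k \<noteq> carrier G)"
  by (simp add: mpl_eq_def retE_eq_full_iff)

lemma strict_Kchain_iff:
  "(\<forall>i<m. Kchain G lam i \<subset> Kchain G lam (Suc i)) \<and> Kchain G lam m = carrier G
     \<longleftrightarrow> Kchain G lam m = carrier G \<and> (\<forall>k<m. Kchain G lam k \<noteq> carrier G)"
proof (cases "Kchain G lam m = carrier G")
  case full: True
  have "Kchain G lam i \<subset> Kchain G lam (Suc i) \<longleftrightarrow> Kchain G lam i \<noteq> carrier G" if "i < m" for i
  proof
    assume "Kchain G lam i \<subset> Kchain G lam (Suc i)"
    then show "Kchain G lam i \<noteq> carrier G"
      using Kchain_subset_carrier[of "Suc i"] by blast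
  next
    assume "Kchain G lam i \<noteq> carrier G"
    then have "Kchain G lam (Suc i) \<noteq> Kchain G lam i"
      using Kchain_stable[of i "m - i"] that full by auto
    then show "Kchain G lam i \<subset> Kchain G lam (Suc i)"
      using Kchain_subset_Suc by blast
  qed
  with full show ?thesis
    by auto
qed simp

lemma least_full_Kchain_iff:
  assumes "1 \<le> m"
  shows "Kchain G lam m = carrier G \<and> (\<forall>k<m. Kchain G lam k \<noteq> carrier G)
     \<longleftrightarrow> Kchain G lam m = carrier G \<and> Kchain G lam (m - 1) \<noteq> carrier G"
proof -
  have "m - 1 < m"
    using assms by simp
  moreover have "Kchain G lam k \<noteq> carrier G" if "k < m" "Kchain G lam (m - 1) \<noteq> carrier G" for k
    using that Kchain_mono[of k "m - 1"] Kchain_subset_carrier[of "m - 1"] by auto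
  ultimately show ?thesis
    by blast
qed

lemma set_star_subset_Kchain_iff:
  "X \<subseteq> carrier G \<Longrightarrow> set_star G lam X (carrier G) \<subseteq> Kchain G lam i \<longleftrightarrow> X \<subseteq> Kchain G lam (Suc i)"
  by (simp add: brace_ideal.set_star_subset_iff[OF Kchain_ideal] Kchain_Suc)

lemma iter_star_Kchain_subset: "s \<le> j \<Longrightarrow> iter_star G lam (Kchain G lam j) s \<subseteq> Kchain G lam (j - s)"
proof (induction s)
  case (Suc s)
  then have "iter_star G lam (Kchain G lam j) s \<subseteq> Kchain G lam (Suc (j - Suc s))"
    by (simp add: Suc_diff_Suc)
  moreover from this have "iter_star G lam (Kchain G lam j) s \<subseteq> carrier G"
    using Kchain_subset_carrier by blast
  ultimately show ?case
    by (simp add: set_star_subset_Kchain_iff)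
qed simp

lemma set_star_subset_carrier:
  assumes "X \<subseteq> carrier G"
  shows "set_star G lam X (carrier G) \<subseteq> carrier G"
proof -
  have "{bstar G lam a b |a b. a \<in> X \<and> b \<in> carrier G} \<subseteq> carrier brace_add"
    using assms by (auto simp: bstar_eq)
  then show ?thesis
    unfolding set_star_def using add.generate_incl by simp
qed

lemma rseries_subset_carrier: "rseries G lam n \<subseteq> carrier G"
proof (induction n)
  case (Suc n)
  then show ?case
    by (cases n) (simp_all add: set_star_subset_carrier)
qed simp

lemma one_mem_rseries: "\<one> \<in> rseries G lam n"
  using generate.one[of brace_add]
  by (cases "(G, lam, n)" rule: rseries.cases) (auto simp: set_star_def)

lemma rseries_subset_Kchain_iff:
  "rseries G lam (Suc j) \<subseteq> Kchain G lam i \<longleftrightarrow> Kchain G lam (i + j) = carrier G"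
proof (induction j arbitrary: i)
  case 0
  show ?case
    using Kchain_subset_carrier by auto
next
  case (Suc j)
  then show ?case
    by (simp add: set_star_subset_Kchain_iff rseries_subset_carrier)
qed

lemma rseries_eq_one_iff: "rseries G lam (Suc j) = {\<one>} \<longleftrightarrow> Kchain G lam j = carrier G"
  using rseries_subset_Kchain_iff[of j 0] one_mem_rseries by auto

lemma rseries_Kchain_bounds_iff:
  assumes "1 \<le> m"
  shows "(\<forall>j\<le>m. rseries G lam (j + 1) \<subseteq> Kchain G lam (m - j))
      \<and> (\<forall>j<m. \<not> rseries G lam (j + 1) \<subseteq> Kchain G lam (m - j - 1))
    \<longleftrightarrow> Kchain G lam m = carrier G \<and> Kchain G lam (m - 1) \<noteq> carrier G"
proof -
  have upper: "rseries G lam (j + 1) \<subseteq> Kchain G lam (m - j) \<longleftrightarrow> Kchain G lam m = carrier G"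
    if "j \<le> m" for j
    using that rseries_subset_Kchain_iff[of j "m - j"] by simp
  have lower: "rseries G lam (j + 1) \<subseteq> Kchain G lam (m - j - 1) \<longleftrightarrow> Kchain G lam (m - 1) = carrier G"
    if "j < m" for j
    using that rseries_subset_Kchain_iff[of j "m - j - 1"] by simp
  have "(\<forall>j\<le>m. rseries G lam (j + 1) \<subseteq> Kchain G lam (m - j)) \<longleftrightarrow> Kchain G lam m = carrier G"
    using upper upper[of 0] by auto
  moreover have "(\<forall>j<m. \<not> rseries G lam (j + 1) \<subseteq> Kchain G lam (m - j - 1))
      \<longleftrightarrow> Kchain G lam (m - 1) \<noteq> carrier G"
    using lower lower[of 0] assms by (auto dest: spec[where x = 0])
  ultimately show ?thesis
    by blast
qed

lemma rseries_right_nilpotency_iff: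
  assumes "1 \<le> m"
  shows "rseries G lam (m + 1) = {\<one>} \<and> rseries G lam m \<noteq> {\<one>}
    \<longleftrightarrow> Kchain G lam m = carrier G \<and> Kchain G lam (m - 1) \<noteq> carrier G"
proof -
  obtain k where m: "m = Suc k"
    using assms by (cases m) auto
  show ?thesis
    using rseries_eq_one_iff[of m] rseries_eq_one_iff[of k] by (simp add: m)
qed

end

theorem mainTheorem6:
  fixes G :: "('a,'b) monoid_scheme" and lam rho :: "'a \<Rightarrow> 'a \<Rightarrow> 'a"
  assumes "symmetric_group G lam rho"
    and "\<exists>a\<in>carrier G. \<exists>b\<in>carrier G. a \<noteq> b"
  shows "(\<forall>j s. 1 \<le> s \<and> s \<le> j \<longrightarrow>
            iter_star G lam (Kchain G lam j) s \<subseteq> Kchain G lam (j - s))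
       \<and> (\<forall>m::nat. 1 \<le> m \<longrightarrow>
            (mpl_eq (carrier G) lam m
               \<longleftrightarrow> (\<forall>i<m. Kchain G lam i \<subset> Kchain G lam (Suc i)) \<and> Kchain G lam m = carrier G)
          \<and> ((\<forall>i<m. Kchain G lam i \<subset> Kchain G lam (Suc i)) \<and> Kchain G lam m = carrier G
               \<longleftrightarrow> (\<forall>j\<le>m. rseries G lam (j + 1) \<subseteq> Kchain G lam (m - j))
                   \<and> (\<forall>j<m. \<not> rseries G lam (j + 1) \<subseteq> Kchain G lam (m - j - 1)))
          \<and> ((\<forall>j\<le>m. rseries G lam (j + 1) \<subseteq> Kchain G lam (m - j))
                   \<and> (\<forall>j<m. \<not> rseries G lam (j + 1) \<subseteq> Kchain G lam (m - j - 1))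
               \<longleftrightarrow> rseries G lam (m + 1) = {\<one>\<^bsub>G\<^esub>} \<and> rseries G lam m \<noteq> {\<one>\<^bsub>G\<^esub>}))"
proof -
  interpret symmetric_grp G lam rho
    by (rule symmetric_grp.intro) (rule assms(1))
  define full where "full m \<longleftrightarrow> Kchain G lam m = carrier G \<and> Kchain G lam (m - 1) \<noteq> carrier G" for m
  have "mpl_eq (carrier G) lam m \<longleftrightarrow> full m"
    and "(\<forall>i<m. Kchain G lam i \<subset> Kchain G lam (Suc i)) \<and> Kchain G lam m = carrier G \<longleftrightarrow> full m"
    and "(\<forall>j\<le>m. rseries G lam (j + 1) \<subseteq> Kchain G lam (m - j))
          \<and> (\<forall>j<m. \<not> rseries G lam (j + 1) \<subseteq> Kchain G lam (m - j - 1)) \<longleftrightarrow> full m"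
    and "rseries G lam (m + 1) = {\<one>\<^bsub>G\<^esub>} \<and> rseries G lam m \<noteq> {\<one>\<^bsub>G\<^esub>} \<longleftrightarrow> full m"
    if "1 \<le> m" for m
    using mpl_eq_iff_Kchain strict_Kchain_iff least_full_Kchain_iff[OF that]
      rseries_Kchain_bounds_iff[OF that] rseries_right_nilpotency_iff[OF that]
    by (simp_all only: full_def)
  then show ?thesis
    using iter_star_Kchain_subset by simp
qed

end
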